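(* Let $\pi$ be a positive continuous probability density on $\mathbb{R}$ and $q:\mathbb{R}^2\to[0,\infty)$ a bounded continuous function with $q(x,\cdot)$ a probability density for each $x$ and, for some $s>0$, $q(x,x+u)=0$ whenever $|u|>s$. Let $a>0$. Then for every bounded continuous function $f:\mathbb{R}\to\mathbb{C}$, $$\|T_{a^c}f\|_{L^2(\pi)}\le\int_{-s}^{s}\Big[\int_{\{|x|>a\}}|f(x+u)|^2\,t(x,x+u)^2\,\pi(x)\,dx\Big]^{1/2}du\le\beta_a\|f\|_{L^2(\pi)},$$ where $\beta_a:=\int_{-s}^{s}\sup_{|x|>a}\sqrt{t(x,x+u)\,t(x+u,x)}\,du$.
   Context: $L^2(\pi)$ is the $L^2$ space of the probability measure $\pi(y)dy$. Set $t(x,y):=\min(q(x,y),\pi(y)q(y,x)/\pi(x))$, $(Tf)(x):=\int_{\mathbb{R}}f(y)t(x,y)\,dy$, and $T_{a^c}f:=1_{\mathbb{R}\setminus[-a,a]}\cdot Tf$. *)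

theory Defs
  imports "HOL-Analysis.Analysis"
begin

definition mh_t :: "(real \<Rightarrow> real) \<Rightarrow> (real \<Rightarrow> real \<Rightarrow> real) \<Rightarrow> real \<Rightarrow> real \<Rightarrow> real" where
  "mh_t \<pi> q x y = min (q x y) (\<pi> y * q y x / \<pi> x)"

definition T_op :: "(real \<Rightarrow> real) \<Rightarrow> (real \<Rightarrow> real \<Rightarrow> real) \<Rightarrow> (real \<Rightarrow> complex) \<Rightarrow> real \<Rightarrow> complex" where
  "T_op \<pi> q f x = (LINT y|lborel. f y * complex_of_real (mh_t \<pi> q x y))"

definition T_ac :: "real \<Rightarrow> (real \<Rightarrow> real) \<Rightarrow> (real \<Rightarrow> real \<Rightarrow> real) \<Rightarrow> (real \<Rightarrow> complex) \<Rightarrow> real \<Rightarrow> complex" where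
  "T_ac a \<pi> q f x = indicator (UNIV - {-a..a}) x * T_op \<pi> q f x"

definition L2_norm :: "(real \<Rightarrow> real) \<Rightarrow> (real \<Rightarrow> complex) \<Rightarrow> real" where
  "L2_norm \<pi> g = sqrt (LINT x|lborel. (cmod (g x))\<^sup>2 * \<pi> x)"

definition beta_a :: "real \<Rightarrow> real \<Rightarrow> (real \<Rightarrow> real) \<Rightarrow> (real \<Rightarrow> real \<Rightarrow> real) \<Rightarrow> real" where
  "beta_a a s \<pi> q = (LBINT u:{-s..s}. (SUP x\<in>{x. \<bar>x\<bar> > a}. sqrt (mh_t \<pi> q x (x + u) * mh_t \<pi> q (x + u) x)))"

end

theory Submission
  imports Defs
begin

text \<open>After the substitution y = x + u, the pointwise bound
  |T_{a^c} f(x)| <= \<integral>_{-s}^{s} 1_{|x|>a} |f(x+u)| t(x,x+u) du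
  and Minkowski's integral inequality (a consequence of Cauchy--Schwarz and Fubini) move the
  L^2(\<pi>) norm inside the u-integral; this is the first inequality. For the second, detailed
  balance t(x,x+u) \<pi>(x) = t(x+u,x) \<pi>(x+u) rewrites t(x,x+u)^2 \<pi>(x) as
  t(x,x+u) t(x+u,x) \<pi>(x+u), which is at most the square of the supremum defining \<beta>_a times
  \<pi>(x+u); translation invariance of Lebesgue measure then turns the remaining x-integral
  into ||f||^2.\<close>

lemma le_sqrt_mult_if_quadratic_nonneg:
  fixes A B C :: real
  assumes quad: "\<And>r. 0 \<le> r\<^sup>2 * A - 2 * r * C + B" and "0 \<le> A"
  shows "C \<le> sqrt A * sqrt B"
proof (cases "C \<le> 0")
  case True
  moreover have "0 \<le> sqrt A * sqrt B" using \<open>0 \<le> A\<close> quad[of 0] by simp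
  ultimately show ?thesis by linarith
next
  case False
  have "A \<noteq> 0"
  proof
    assume "A = 0"
    then show False using quad[of "(B + 1) / (2 * C)"] False by (simp add: field_simps)
  qed
  then have "C\<^sup>2 \<le> A * B"
    using quad[of "C / A"] \<open>0 \<le> A\<close> by (simp add: field_simps power2_eq_square)
  then have "sqrt (C\<^sup>2) \<le> sqrt (A * B)" by (rule real_sqrt_le_mono)
  then show ?thesis using False by (simp add: real_sqrt_mult)
qed

lemma sqrt_le_if_le_sqrt_mult:
  fixes N W :: real
  assumes "0 \<le> W" "N \<le> sqrt N * W"
  shows "sqrt N \<le> W"
proof (cases "N > 0")
  case True
  then have "sqrt N * sqrt N \<le> sqrt N * W" using assms(2) by simp
  then show ?thesis using True by (simp add: mult_le_cancel_left_pos del: real_sqrt_mult_self)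
next
  case False
  then have "sqrt N \<le> 0" by simp
  then show ?thesis using assms(1) by linarith
qed

lemma weighted_Cauchy_Schwarz:
  fixes p a b :: "'a \<Rightarrow> real"
  assumes p: "\<And>x. 0 \<le> p x"
    and ia: "integrable M (\<lambda>x. p x * (a x)\<^sup>2)"
    and ib: "integrable M (\<lambda>x. p x * (b x)\<^sup>2)"
    and iab: "integrable M (\<lambda>x. p x * (a x * b x))"
  shows "(\<integral>x. p x * (a x * b x) \<partial>M)
    \<le> sqrt (\<integral>x. p x * (a x)\<^sup>2 \<partial>M) * sqrt (\<integral>x. p x * (b x)\<^sup>2 \<partial>M)"
proof (rule le_sqrt_mult_if_quadratic_nonneg)
  fix r
  have "0 \<le> (\<integral>x. p x * (r * a x - b x)\<^sup>2 \<partial>M)"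
    by (intro integral_nonneg_AE AE_I2 mult_nonneg_nonneg p zero_le_power2)
  also have "\<dots> = (\<integral>x. r\<^sup>2 * (p x * (a x)\<^sup>2) - 2 * r * (p x * (a x * b x)) + p x * (b x)\<^sup>2 \<partial>M)"
    by (rule Bochner_Integration.integral_cong) (simp_all add: power2_eq_square algebra_simps)
  also have "\<dots> = r\<^sup>2 * (\<integral>x. p x * (a x)\<^sup>2 \<partial>M) - 2 * r * (\<integral>x. p x * (a x * b x) \<partial>M)
      + (\<integral>x. p x * (b x)\<^sup>2 \<partial>M)"
    using ia ib iab by simp
  finally show "0 \<le> \<dots>" .
next
  show "0 \<le> (\<integral>x. p x * (a x)\<^sup>2 \<partial>M)"
    by (intro integral_nonneg_AE AE_I2 mult_nonneg_nonneg p zero_le_power2)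
qed

lemma integrable_bound_by_multiple:
  fixes p g :: "'a \<Rightarrow> real"
  assumes "integrable M p" "g \<in> borel_measurable M" "\<And>x. \<bar>g x\<bar> \<le> K * p x"
  shows "integrable M g"
proof (rule Bochner_Integration.integrable_bound[where f="\<lambda>x. K * p x"])
  show "AE x in M. norm (g x) \<le> norm (K * p x)"
    using assms(3) by (auto intro!: order_trans[OF _ abs_ge_self])
qed (use assms(1,2) in simp_all)

lemma integrable_mult_bounded:
  fixes p g :: "'a \<Rightarrow> real"
  assumes "integrable M p" "g \<in> borel_measurable M" "\<And>x. \<bar>g x\<bar> \<le> B"
  shows "integrable M (\<lambda>x. p x * g x)"
proof (rule integrable_bound_by_multiple[where K=B])
  show "integrable M (\<lambda>x. \<bar>p x\<bar>)" using assms(1) by simp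
  show "\<bar>p x * g x\<bar> \<le> B * \<bar>p x\<bar>" for x
    using mult_left_mono[OF assms(3)[of x] abs_ge_zero[of "p x"]] by (simp add: abs_mult mult.commute)
qed (use assms(1,2) borel_measurable_integrable in measurable)

lemma integral_le_if_bounded_support:
  fixes h :: "real \<Rightarrow> real"
  assumes "\<And>u. h u \<le> C" "\<And>u. u \<notin> K \<Longrightarrow> h u = 0" "0 \<le> C"
    and "K \<in> sets lborel" "emeasure lborel K < \<infinity>"
  shows "(\<integral>u. h u \<partial>lborel) \<le> C * measure lborel K"
proof -
  have "(\<integral>u. h u \<partial>lborel) \<le> (\<integral>u. C * indicator K u \<partial>lborel)"
  proof (rule integral_mono')
    show "h u \<le> C * indicator K u" for u
      using assms(1,2)[of u] by (cases "u \<in> K") auto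
  qed (use assms(3-5) in auto)
  then show ?thesis by simp
qed

lemma integrable_pair_bound_by_weight:
  fixes p :: "real \<Rightarrow> real" and g :: "real \<times> real \<Rightarrow> real"
  assumes p_int: "integrable lborel p" and p_nonneg: "\<And>x. 0 \<le> p x"
    and K: "K \<in> sets lborel" "emeasure lborel K < \<infinity>"
    and g_meas: "g \<in> borel_measurable (lborel \<Otimes>\<^sub>M lborel)"
    and g_bound: "\<And>x u. \<bar>g (x, u)\<bar> \<le> D * (p x * indicator K u)"
  shows "integrable (lborel \<Otimes>\<^sub>M lborel) g"
proof (rule integrable_bound_by_multiple[OF _ g_meas])
  have [measurable]: "p \<in> borel_measurable lborel" "K \<in> sets lborel"
    using borel_measurable_integrable[OF p_int] K(1) by auto
  show "integrable (lborel \<Otimes>\<^sub>M lborel) (\<lambda>z. p (fst z) * indicator K (snd z) :: real)"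
  proof (rule lborel_pair.Fubini_integrable)
    have "(\<lambda>x. \<integral>u. norm (p x * indicator K u :: real) \<partial>lborel) = (\<lambda>x. measure lborel K * p x)"
      using p_nonneg by (auto simp: abs_mult)
    then show "integrable lborel (\<lambda>x. \<integral>u. norm (p (fst (x, u)) * indicator K (snd (x, u)) :: real) \<partial>lborel)"
      using p_int by simp
  qed (use K in auto)
  show "\<bar>g z\<bar> \<le> D * (p (fst z) * indicator K (snd z))" for z
    using g_bound[of "fst z" "snd z"] by simp
qed

lemma Minkowski_integral_inequality_integrable:
  fixes p :: "real \<Rightarrow> real" and h :: "real \<Rightarrow> real \<Rightarrow> real"
  defines "F \<equiv> \<lambda>x. \<integral>u. h x u \<partial>lborel"
  assumes p_nonneg: "\<And>x. 0 \<le> p x"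
    and pFh_int: "integrable (lborel \<Otimes>\<^sub>M lborel) (\<lambda>(x, u). p x * (F x * h x u))"
    and pFh_int_x: "\<And>u. integrable lborel (\<lambda>x. p x * (F x * h x u))"
    and pF2_int: "integrable lborel (\<lambda>x. p x * (F x)\<^sup>2)"
    and ph2_int: "\<And>u. integrable lborel (\<lambda>x. p x * (h x u)\<^sup>2)"
    and w_int: "integrable lborel (\<lambda>u. sqrt (\<integral>x. p x * (h x u)\<^sup>2 \<partial>lborel))"
  shows "sqrt (\<integral>x. p x * (F x)\<^sup>2 \<partial>lborel)
    \<le> (\<integral>u. sqrt (\<integral>x. p x * (h x u)\<^sup>2 \<partial>lborel) \<partial>lborel)"
proof -
  define N where "N = (\<integral>x. p x * (F x)\<^sup>2 \<partial>lborel)"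
  define w where "w u = sqrt (\<integral>x. p x * (h x u)\<^sup>2 \<partial>lborel)" for u
  have N_nonneg: "0 \<le> N"
    unfolding N_def by (simp add: integral_nonneg_AE p_nonneg)
  have w_nonneg: "0 \<le> w u" for u
    unfolding w_def by (simp add: integral_nonneg_AE p_nonneg)
  have "N = (\<integral>x. \<integral>u. p x * (F x * h x u) \<partial>lborel \<partial>lborel)"
    by (simp add: N_def F_def power2_eq_square)
  also have "\<dots> = (\<integral>u. \<integral>x. p x * (F x * h x u) \<partial>lborel \<partial>lborel)"
    using lborel_pair.Fubini_integral[OF pFh_int] by simp
  also have "\<dots> \<le> (\<integral>u. sqrt N * w u \<partial>lborel)"
  proof (rule integral_mono')
    show "(\<integral>x. p x * (F x * h x u) \<partial>lborel) \<le> sqrt N * w u" for u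
      unfolding N_def w_def by (intro weighted_Cauchy_Schwarz p_nonneg ph2_int pF2_int pFh_int_x)
  qed (use w_int w_nonneg N_nonneg in \<open>simp_all add: w_def\<close>)
  finally have "N \<le> sqrt N * (\<integral>u. w u \<partial>lborel)" by simp
  then have "sqrt N \<le> (\<integral>u. w u \<partial>lborel)"
    by (intro sqrt_le_if_le_sqrt_mult) (simp_all add: integral_nonneg_AE w_nonneg)
  then show ?thesis by (simp add: N_def w_def)
qed

lemma integrable_sqrt_integral_square:
  fixes p :: "real \<Rightarrow> real" and h :: "real \<Rightarrow> real \<Rightarrow> real"
  assumes p_nonneg: "\<And>x. 0 \<le> p x" and p_int: "integrable lborel p"
    and h_nonneg: "\<And>x u. 0 \<le> h x u" and h_le: "\<And>x u. h x u \<le> C"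
    and h_support: "\<And>x u. u \<notin> K \<Longrightarrow> h x u = 0"
    and K: "K \<in> sets lborel" "emeasure lborel K < \<infinity>"
    and h_meas: "case_prod h \<in> borel_measurable (lborel \<Otimes>\<^sub>M lborel)"
  shows "integrable lborel (\<lambda>u. sqrt (\<integral>x. p x * (h x u)\<^sup>2 \<partial>lborel))"
proof (rule integrable_bound_by_multiple)
  have [measurable]: "p \<in> borel_measurable lborel"
    using p_int by (rule borel_measurable_integrable)
  have [measurable (raw)]: "(\<lambda>z. h (f z) (g z)) \<in> borel_measurable M"
    if "f \<in> measurable M lborel" "g \<in> measurable M lborel" for M :: "'b measure" and f g
    using measurable_compose[OF measurable_Pair[OF that] h_meas] by simp
  have C_nonneg: "0 \<le> C" using h_nonneg h_le order_trans by blast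
  show "integrable lborel (indicator K :: real \<Rightarrow> real)"
    using K by (rule integrable_real_indicator)
  show "\<bar>sqrt (\<integral>x. p x * (h x u)\<^sup>2 \<partial>lborel)\<bar> \<le> C * sqrt (\<integral>x. p x \<partial>lborel) * indicator K u" for u
  proof (cases "u \<in> K")
    case True
    have "(\<integral>x. p x * (h x u)\<^sup>2 \<partial>lborel) \<le> (\<integral>x. C\<^sup>2 * p x \<partial>lborel)"
      using p_int p_nonneg h_nonneg h_le
      by (intro integral_mono') (auto simp: mult.commute mult_left_mono power_mono)
    then have "sqrt (\<integral>x. p x * (h x u)\<^sup>2 \<partial>lborel) \<le> sqrt (C\<^sup>2 * (\<integral>x. p x \<partial>lborel))"
      by (simp add: real_sqrt_le_mono)
    then show ?thesis
      using True C_nonneg by (simp add: real_sqrt_mult integral_nonneg_AE p_nonneg)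
  qed (simp add: h_support)
  show "(\<lambda>u. sqrt (\<integral>x. p x * (h x u)\<^sup>2 \<partial>lborel)) \<in> borel_measurable lborel"
    by measurable
qed

lemma Minkowski_integral_inequality:
  fixes p :: "real \<Rightarrow> real" and h :: "real \<Rightarrow> real \<Rightarrow> real"
  assumes p_nonneg: "\<And>x. 0 \<le> p x" and p_int: "integrable lborel p"
    and h_nonneg: "\<And>x u. 0 \<le> h x u" and h_le: "\<And>x u. h x u \<le> C"
    and h_support: "\<And>x u. u \<notin> K \<Longrightarrow> h x u = 0"
    and K: "K \<in> sets lborel" "emeasure lborel K < \<infinity>"
    and h_meas: "case_prod h \<in> borel_measurable (lborel \<Otimes>\<^sub>M lborel)"
  shows "sqrt (\<integral>x. p x * (\<integral>u. h x u \<partial>lborel)\<^sup>2 \<partial>lborel)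
    \<le> (\<integral>u. sqrt (\<integral>x. p x * (h x u)\<^sup>2 \<partial>lborel) \<partial>lborel)"
proof (rule Minkowski_integral_inequality_integrable[OF p_nonneg])
  have [measurable]: "p \<in> borel_measurable lborel" "K \<in> sets lborel"
    using borel_measurable_integrable[OF p_int] K(1) by auto
  have [measurable (raw)]: "(\<lambda>z. h (f z) (g z)) \<in> borel_measurable M"
    if "f \<in> measurable M lborel" "g \<in> measurable M lborel" for M :: "'b measure" and f g
    using measurable_compose[OF measurable_Pair[OF that] h_meas] by simp
  define F where "F x = (\<integral>u. h x u \<partial>lborel)" for x
  define L where "L = measure lborel K"
  have C_nonneg: "0 \<le> C" using h_nonneg h_le order_trans by blast
  have F_nonneg: "0 \<le> F x" for x
    unfolding F_def by (intro integral_nonneg_AE AE_I2 h_nonneg)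
  have F_le: "F x \<le> C * L" for x
    unfolding F_def L_def using h_le h_support C_nonneg K by (rule integral_le_if_bounded_support)
  have Fh_bound: "\<bar>F x * h x u\<bar> \<le> C * L * C" for x u
  proof -
    have "F x * h x u \<le> (C * L) * C"
      by (rule mult_mono) (use F_le h_le C_nonneg h_nonneg in \<open>simp_all add: L_def\<close>)
    then show ?thesis using F_nonneg[of x] h_nonneg[of x u] by simp
  qed
  have [measurable]: "F \<in> borel_measurable lborel"
    unfolding F_def by measurable
  show "integrable lborel (\<lambda>x. p x * (F x * h x u))" for u
    using Fh_bound by (rule integrable_mult_bounded[OF p_int, rotated]) measurable
  show "integrable lborel (\<lambda>x. p x * (F x)\<^sup>2)"
    using F_nonneg F_le by (intro integrable_mult_bounded[OF p_int, where B="(C * L)\<^sup>2"])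
      (auto simp: power_mono)
  show "integrable lborel (\<lambda>x. p x * (h x u)\<^sup>2)" for u
    using h_nonneg h_le by (intro integrable_mult_bounded[OF p_int, where B="C\<^sup>2"])
      (auto simp: power_mono)
  show "integrable (lborel \<Otimes>\<^sub>M lborel) (\<lambda>(x, u). p x * (F x * h x u))"
  proof (rule integrable_pair_bound_by_weight[OF p_int p_nonneg K])
    show "\<bar>case (x, u) of (x, u) \<Rightarrow> p x * (F x * h x u)\<bar> \<le> C * L * C * (p x * indicator K u)" for x u
      using Fh_bound[of x u] h_support[of u x] p_nonneg[of x]
      by (cases "u \<in> K") (simp_all add: abs_mult mult_left_mono mult.commute)
  qed measurable
  show "integrable lborel (\<lambda>u. sqrt (\<integral>x. p x * (h x u)\<^sup>2 \<partial>lborel))"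
    using p_nonneg p_int h_nonneg h_le h_support K h_meas by (rule integrable_sqrt_integral_square)
qed

lemma mh_t_nonneg:
  assumes "0 < \<pi> x" "0 \<le> \<pi> y" "0 \<le> q x y" "0 \<le> q y x"
  shows "0 \<le> mh_t \<pi> q x y"
  using assms by (simp add: mh_t_def)

lemma mh_t_le: "mh_t \<pi> q x y \<le> q x y"
  by (simp add: mh_t_def)

lemma mh_t_detailed_balance:
  assumes "0 < \<pi> x" "0 < \<pi> y"
  shows "mh_t \<pi> q x y * \<pi> x = mh_t \<pi> q y x * \<pi> y"
  using assms by (auto simp: mh_t_def min_def field_simps)

lemma mh_t_eq_0:
  assumes "q x y = 0" "0 < \<pi> x" "0 \<le> \<pi> y" "0 \<le> q y x"
  shows "mh_t \<pi> q x y = 0"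
  using assms by (simp add: mh_t_def)

lemma continuous_on_mh_t:
  assumes "continuous_on UNIV \<pi>" "\<And>x. \<pi> x \<noteq> 0"
    and "continuous_on UNIV (\<lambda>z. q (fst z) (snd z))"
  shows "continuous_on UNIV (\<lambda>z. mh_t \<pi> q (fst z) (snd z))"
proof -
  have "continuous_on UNIV (\<lambda>z. q (snd z) (fst z))"
    by (rule continuous_on_compose2[OF assms(3), of UNIV "\<lambda>z. (snd z, fst z)", simplified])
      (intro continuous_intros)
  moreover have "continuous_on UNIV (\<lambda>z::real \<times> real. \<pi> (fst z))"
    "continuous_on UNIV (\<lambda>z::real \<times> real. \<pi> (snd z))"
    using continuous_on_compose2[OF assms(1) continuous_on_fst[OF continuous_on_id]]
      continuous_on_compose2[OF assms(1) continuous_on_snd[OF continuous_on_id]] by auto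
  ultimately show ?thesis
    unfolding mh_t_def using assms by (intro continuous_intros) auto
qed

lemma borel_measurable_SUP_continuous:
  fixes \<phi> :: "'a \<Rightarrow> 'b::topological_space \<Rightarrow> real"
  assumes cont: "\<And>x. x \<in> A \<Longrightarrow> continuous_on UNIV (\<phi> x)"
    and "A \<noteq> {}" and bdd: "\<And>u. bdd_above ((\<lambda>x. \<phi> x u) ` A)"
  shows "(\<lambda>u. SUP x\<in>A. \<phi> x u) \<in> borel_measurable borel"
  unfolding borel_measurable_iff_greater
proof
  fix c
  have "{u. c < (SUP x\<in>A. \<phi> x u)} = (\<Union>x\<in>A. {u. c < \<phi> x u})"
    using less_cSUP_iff[OF \<open>A \<noteq> {}\<close> bdd] by auto
  moreover have "open (\<Union>x\<in>A. {u. c < \<phi> x u})"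
    using cont by (intro open_UN ballI open_Collect_less continuous_on_const) auto
  ultimately show "{u \<in> space borel. c < (SUP x\<in>A. \<phi> x u)} \<in> sets borel" by simp
qed

lemma L2_norm_le_sqrt_integral:
  assumes "\<And>x. 0 \<le> \<pi> x" "\<And>x. cmod (g x) \<le> H x"
    and "integrable lborel (\<lambda>x. \<pi> x * (H x)\<^sup>2)"
  shows "L2_norm \<pi> g \<le> sqrt (\<integral>x. \<pi> x * (H x)\<^sup>2 \<partial>lborel)"
  unfolding L2_norm_def
proof (intro real_sqrt_le_mono integral_mono')
  show "(cmod (g x))\<^sup>2 * \<pi> x \<le> \<pi> x * (H x)\<^sup>2" for x
    using assms(1,2)[of x] by (simp add: mult.commute mult_left_mono power_mono)
qed (use assms in auto)

locale mh_kernel =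
  fixes \<pi> :: "real \<Rightarrow> real" and q :: "real \<Rightarrow> real \<Rightarrow> real" and s :: real
  assumes pi_pos: "\<And>x. 0 < \<pi> x"
    and pi_cont: "continuous_on UNIV \<pi>"
    and pi_int: "integrable lborel \<pi>"
    and q_nonneg: "\<And>x y. 0 \<le> q x y"
    and q_bounded: "\<exists>B. \<forall>x y. q x y \<le> B"
    and q_cont: "continuous_on UNIV (\<lambda>z. q (fst z) (snd z))"
    and q_support: "\<And>x u. s < \<bar>u\<bar> \<Longrightarrow> q x (x + u) = 0"
begin

abbreviation t :: "real \<Rightarrow> real \<Rightarrow> real" where "t \<equiv> mh_t \<pi> q"

lemma t_nonneg: "0 \<le> t x y"
  by (rule mh_t_nonneg) (simp_all add: pi_pos q_nonneg less_imp_le)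

lemma t_shift_eq_0:
  assumes "s < \<bar>u\<bar>"
  shows "t x (x + u) = 0"
  by (rule mh_t_eq_0) (simp_all add: assms q_support pi_pos q_nonneg less_imp_le)

lemma t_bounded:
  obtains B where "\<And>x y. t x y \<le> B" "0 \<le> B"
proof -
  obtain B where "\<And>x y. q x y \<le> B" using q_bounded by blast
  then show thesis
    using that mh_t_le t_nonneg order_trans by metis
qed

lemma continuous_on_t [continuous_intros]:
  fixes g k :: "'a::topological_space \<Rightarrow> real"
  assumes "continuous_on S g" "continuous_on S k"
  shows "continuous_on S (\<lambda>z. t (g z) (k z))"
proof -
  have "continuous_on UNIV (\<lambda>z. t (fst z) (snd z))"
    using pi_cont pi_pos q_cont by (intro continuous_on_mh_t) (auto simp: less_imp_neq[symmetric])
  from continuous_on_compose2[OF this continuous_on_Pair[OF assms]] show ?thesis by simp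
qed

lemma measurable_t [measurable (raw)]:
  assumes "g \<in> borel_measurable M" "k \<in> borel_measurable M"
  shows "(\<lambda>z. t (g z) (k z)) \<in> borel_measurable M"
proof -
  have "(\<lambda>z. t (fst z) (snd z)) \<in> borel_measurable (borel \<Otimes>\<^sub>M borel)"
    unfolding borel_prod by (intro borel_measurable_continuous_onI continuous_intros)
  from measurable_compose[OF measurable_Pair[OF assms] this] show ?thesis by simp
qed

lemma norm_T_op_le:
  "cmod (T_op \<pi> q f x) \<le> (LBINT u:{-s..s}. cmod (f (x + u)) * t x (x + u))"
proof -
  have "cmod (T_op \<pi> q f x) \<le> (\<integral>y. norm (f y * complex_of_real (t x y)) \<partial>lborel)"
    unfolding T_op_def by (rule integral_norm_bound)
  also have "\<dots> = (\<integral>y. cmod (f y) * t x y \<partial>lborel)"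
    using t_nonneg by (simp add: norm_mult)
  also have "\<dots> = (\<integral>u. cmod (f (x + u)) * t x (x + u) \<partial>lborel)"
    using lborel_integral_real_affine[where c=1 and t=x and f="\<lambda>y. cmod (f y) * t x y"] by simp
  also have "\<dots> = (LBINT u:{-s..s}. cmod (f (x + u)) * t x (x + u))"
    unfolding set_lebesgue_integral_def
  proof (rule Bochner_Integration.integral_cong)
    show "cmod (f (x + u)) * t x (x + u) = indicator {-s..s} u *\<^sub>R (cmod (f (x + u)) * t x (x + u))" for u
      by (cases "u \<in> {-s..s}") (auto simp: t_shift_eq_0)
  qed simp
  finally show ?thesis .
qed

text \<open>The integrand of T f after the substitution y = x + u, cut off to |x| > a and, by the
  support of q, to |u| <= s.\<close>

definition T_ac_majorant :: "real \<Rightarrow> (real \<Rightarrow> complex) \<Rightarrow> real \<Rightarrow> real \<Rightarrow> real" where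
  "T_ac_majorant a f x u =
    indicator {x. a < \<bar>x\<bar>} x * (indicator {-s..s} u * (cmod (f (x + u)) * t x (x + u)))"

lemma T_ac_majorant_nonneg: "0 \<le> T_ac_majorant a f x u"
  by (simp add: T_ac_majorant_def t_nonneg)

lemma T_ac_majorant_eq_0: "u \<notin> {-s..s} \<Longrightarrow> T_ac_majorant a f x u = 0"
  by (simp add: T_ac_majorant_def)

lemma T_ac_majorant_bounded:
  assumes "bounded (range f)"
  obtains C where "\<And>x u. T_ac_majorant a f x u \<le> C"
proof -
  obtain M where M: "\<And>y. cmod (f y) \<le> M" using assms by (auto simp: bounded_iff)
  obtain B where B: "\<And>x y. t x y \<le> B" "0 \<le> B" using t_bounded by blast
  have "0 \<le> M" using M[of 0] norm_ge_zero order_trans by blast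
  then have "T_ac_majorant a f x u \<le> M * B" for x u
    using M B t_nonneg by (simp add: T_ac_majorant_def indicator_def mult_mono)
  then show thesis by (rule that)
qed

lemma measurable_T_ac_majorant:
  assumes [measurable]: "f \<in> borel_measurable borel"
  shows "case_prod (T_ac_majorant a f) \<in> borel_measurable (lborel \<Otimes>\<^sub>M lborel)"
proof -
  have [measurable]: "{x::real. a < \<bar>x\<bar>} \<in> sets borel"
    by (intro borel_open open_Collect_less continuous_intros)
  show ?thesis unfolding T_ac_majorant_def by measurable
qed

lemma norm_T_ac_le_integral_majorant:
  "cmod (T_ac a \<pi> q f x) \<le> (\<integral>u. T_ac_majorant a f x u \<partial>lborel)"
proof -
  have "UNIV - {-a..a} = {x. a < \<bar>x\<bar>}" by auto
  then have "cmod (T_ac a \<pi> q f x) = indicator {x. a < \<bar>x\<bar>} x * cmod (T_op \<pi> q f x)"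
    by (simp add: T_ac_def norm_mult indicator_def)
  also have "\<dots> \<le> indicator {x. a < \<bar>x\<bar>} x * (LBINT u:{-s..s}. cmod (f (x + u)) * t x (x + u))"
    by (intro mult_left_mono norm_T_op_le) simp
  also have "\<dots> = (\<integral>u. T_ac_majorant a f x u \<partial>lborel)"
    unfolding T_ac_majorant_def set_lebesgue_integral_def by simp
  finally show ?thesis .
qed

lemma sqrt_integral_square_T_ac_majorant:
  "sqrt (\<integral>x. \<pi> x * (T_ac_majorant a f x u)\<^sup>2 \<partial>lborel)
    = indicator {-s..s} u * sqrt (LBINT x:{x. a < \<bar>x\<bar>}. (cmod (f (x + u)))\<^sup>2 * (t x (x + u))\<^sup>2 * \<pi> x)"
proof (cases "u \<in> {-s..s}")
  case True
  have "\<pi> x * (T_ac_majorant a f x u)\<^sup>2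
      = indicator {x. a < \<bar>x\<bar>} x *\<^sub>R ((cmod (f (x + u)))\<^sup>2 * (t x (x + u))\<^sup>2 * \<pi> x)" for x
    using True by (simp add: T_ac_majorant_def indicator_def power_mult_distrib)
  from Bochner_Integration.integral_cong[OF refl this] True show ?thesis
    by (simp add: set_lebesgue_integral_def)
qed (simp add: T_ac_majorant_eq_0)

lemma L2_norm_T_ac_le:
  assumes f_meas: "f \<in> borel_measurable borel" and f_bdd: "bounded (range f)"
  shows "L2_norm \<pi> (T_ac a \<pi> q f)
    \<le> (LBINT u:{-s..s}. sqrt (LBINT x:{x. a < \<bar>x\<bar>}. (cmod (f (x + u)))\<^sup>2 * (t x (x + u))\<^sup>2 * \<pi> x))"
proof -
  let ?h = "T_ac_majorant a f"
  obtain C where C: "\<And>x u. ?h x u \<le> C" using T_ac_majorant_bounded[OF f_bdd] by blast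
  have C_nonneg: "0 \<le> C" using C T_ac_majorant_nonneg order_trans by blast
  have Icc: "{-s..s} \<in> sets lborel" "emeasure lborel {-s..s} < \<infinity>"
    by (simp_all add: emeasure_lborel_Icc_eq)
  have "L2_norm \<pi> (T_ac a \<pi> q f) \<le> sqrt (\<integral>x. \<pi> x * (\<integral>u. ?h x u \<partial>lborel)\<^sup>2 \<partial>lborel)"
  proof (rule L2_norm_le_sqrt_integral)
    have "(\<lambda>x. \<integral>u. ?h x u \<partial>lborel) \<in> borel_measurable lborel"
      using measurable_T_ac_majorant[OF f_meas]
      by (intro lborel.borel_measurable_lebesgue_integral) (simp add: case_prod_unfold)
    moreover have "\<bar>(\<integral>u. ?h x u \<partial>lborel)\<^sup>2\<bar> \<le> (C * measure lborel {-s..s})\<^sup>2" for x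
    proof -
      have "(\<integral>u. ?h x u \<partial>lborel) \<le> C * measure lborel {-s..s}"
        using C T_ac_majorant_eq_0 C_nonneg Icc by (rule integral_le_if_bounded_support)
      then show ?thesis by (simp add: integral_nonneg_AE T_ac_majorant_nonneg power_mono)
    qed
    ultimately show "integrable lborel (\<lambda>x. \<pi> x * (\<integral>u. ?h x u \<partial>lborel)\<^sup>2)"
      by (intro integrable_mult_bounded[OF pi_int] borel_measurable_power)
  qed (simp_all add: pi_pos less_imp_le norm_T_ac_le_integral_majorant)
  also have "\<dots> \<le> (\<integral>u. sqrt (\<integral>x. \<pi> x * (?h x u)\<^sup>2 \<partial>lborel) \<partial>lborel)"
    using pi_pos pi_int T_ac_majorant_nonneg C T_ac_majorant_eq_0 Icc measurable_T_ac_majorant[OF f_meas]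
    by (intro Minkowski_integral_inequality) (auto intro: less_imp_le)
  finally show ?thesis
    by (simp add: sqrt_integral_square_T_ac_majorant set_lebesgue_integral_def)
qed

definition t_sym :: "real \<Rightarrow> real \<Rightarrow> real" where
  "t_sym x u = sqrt (t x (x + u) * t (x + u) x)"

definition t_sym_sup :: "real set \<Rightarrow> real \<Rightarrow> real" where
  "t_sym_sup A u = (SUP x\<in>A. t_sym x u)"

lemma beta_a_eq_t_sym_sup: "beta_a a s \<pi> q = (LBINT u:{-s..s}. t_sym_sup {x. a < \<bar>x\<bar>} u)"
  by (simp add: beta_a_def t_sym_sup_def t_sym_def)

lemma t_sym_nonneg: "0 \<le> t_sym x u"
  unfolding t_sym_def using mult_nonneg_nonneg[OF t_nonneg t_nonneg] by (rule real_sqrt_ge_zero)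

lemma t_sym_bounded:
  obtains B where "\<And>x u. t_sym x u \<le> B"
proof -
  obtain B where B: "\<And>x y. t x y \<le> B" "0 \<le> B" using t_bounded by blast
  have "t_sym x u \<le> B" for x u
  proof -
    have "t x (x + u) * t (x + u) x \<le> B * B" using B t_nonneg by (intro mult_mono) auto
    then have "t_sym x u \<le> sqrt (B * B)" unfolding t_sym_def by (rule real_sqrt_le_mono)
    then show ?thesis using B(2) by simp
  qed
  then show thesis by (rule that)
qed

lemma bdd_above_t_sym: "bdd_above ((\<lambda>x. t_sym x u) ` A)"
proof -
  obtain B where "\<And>x u. t_sym x u \<le> B" using t_sym_bounded by blast
  then show ?thesis by (intro bdd_aboveI) auto
qed

lemma t_sym_le_sup: "x \<in> A \<Longrightarrow> t_sym x u \<le> t_sym_sup A u"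
  unfolding t_sym_sup_def by (rule cSUP_upper[OF _ bdd_above_t_sym])

lemma t_sym_sup_nonneg: "A \<noteq> {} \<Longrightarrow> 0 \<le> t_sym_sup A u"
  using order_trans[OF t_sym_nonneg t_sym_le_sup] by blast

lemma t_sym_sup_bounded:
  obtains B where "\<And>A u. A \<noteq> {} \<Longrightarrow> t_sym_sup A u \<le> B"
proof -
  obtain B where "\<And>x u. t_sym x u \<le> B" using t_sym_bounded by blast
  then have "t_sym_sup A u \<le> B" if "A \<noteq> {}" for A u
    unfolding t_sym_sup_def using that by (intro cSUP_least) auto
  then show thesis by (rule that)
qed

lemma measurable_t_sym_sup: "A \<noteq> {} \<Longrightarrow> t_sym_sup A \<in> borel_measurable borel"
  unfolding t_sym_sup_def[abs_def] t_sym_def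
  using bdd_above_t_sym[unfolded t_sym_def]
  by (intro borel_measurable_SUP_continuous continuous_intros) auto

lemma integrable_norm_square_weighted:
  assumes [measurable]: "f \<in> borel_measurable borel" and "bounded (range f)"
  shows "integrable lborel (\<lambda>y. (cmod (f y))\<^sup>2 * \<pi> y)"
proof -
  obtain M where "\<And>y. cmod (f y) \<le> M" using assms(2) by (auto simp: bounded_iff)
  then have "\<bar>(cmod (f y))\<^sup>2\<bar> \<le> M\<^sup>2" for y by (simp add: power_mono)
  then have "integrable lborel (\<lambda>y. \<pi> y * (cmod (f y))\<^sup>2)"
    by (intro integrable_mult_bounded[OF pi_int]) measurable
  then show ?thesis by (simp add: mult.commute)
qed

lemma t_square_mult_pi_le:
  assumes "t_sym x u \<le> c"
  shows "(t x (x + u))\<^sup>2 * \<pi> x \<le> c\<^sup>2 * \<pi> (x + u)"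
proof -
  have "(t x (x + u))\<^sup>2 * \<pi> x = (t x (x + u) * t (x + u) x) * \<pi> (x + u)"
    using mh_t_detailed_balance[where \<pi>=\<pi> and q=q and x=x and y="x + u"] pi_pos
    by (simp add: power2_eq_square mult.assoc)
  also have "t x (x + u) * t (x + u) x = (t_sym x u)\<^sup>2"
    unfolding t_sym_def using mult_nonneg_nonneg[OF t_nonneg t_nonneg] by simp
  also have "(t_sym x u)\<^sup>2 * \<pi> (x + u) \<le> c\<^sup>2 * \<pi> (x + u)"
    using assms t_sym_nonneg pi_pos[of "x + u"] by (intro mult_right_mono power_mono) auto
  finally show ?thesis .
qed

lemma set_integral_shift_le:
  assumes [measurable]: "f \<in> borel_measurable borel" and f_bdd: "bounded (range f)"
    and [measurable]: "A \<in> sets borel"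
    and bound: "\<And>x. x \<in> A \<Longrightarrow> t_sym x u \<le> c"
  shows "(LBINT x:A. (cmod (f (x + u)))\<^sup>2 * (t x (x + u))\<^sup>2 * \<pi> x)
    \<le> c\<^sup>2 * (\<integral>y. (cmod (f y))\<^sup>2 * \<pi> y \<partial>lborel)"
proof -
  have shifted_int: "integrable lborel (\<lambda>x. c\<^sup>2 * ((cmod (f (x + u)))\<^sup>2 * \<pi> (x + u)))"
    using lborel_integrable_real_affine_iff[where c=1 and t=u and f="\<lambda>y. (cmod (f y))\<^sup>2 * \<pi> y"]
      integrable_norm_square_weighted[OF assms(1,2)] by (simp add: add.commute)
  have "(LBINT x:A. (cmod (f (x + u)))\<^sup>2 * (t x (x + u))\<^sup>2 * \<pi> x)
      \<le> (\<integral>x. c\<^sup>2 * ((cmod (f (x + u)))\<^sup>2 * \<pi> (x + u)) \<partial>lborel)"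
    unfolding set_lebesgue_integral_def
  proof (rule integral_mono'[OF shifted_int])
    fix x
    show "indicator A x *\<^sub>R ((cmod (f (x + u)))\<^sup>2 * (t x (x + u))\<^sup>2 * \<pi> x)
      \<le> c\<^sup>2 * ((cmod (f (x + u)))\<^sup>2 * \<pi> (x + u))"
    proof (cases "x \<in> A")
      case True
      have "(cmod (f (x + u)))\<^sup>2 * ((t x (x + u))\<^sup>2 * \<pi> x)
          \<le> (cmod (f (x + u)))\<^sup>2 * (c\<^sup>2 * \<pi> (x + u))"
        using bound[OF True] by (intro mult_left_mono t_square_mult_pi_le) simp_all
      then show ?thesis
        using True by (simp add: mult_ac)
    qed (simp add: pi_pos less_imp_le)
  qed (simp add: pi_pos less_imp_le)
  also have "\<dots> = c\<^sup>2 * (\<integral>y. (cmod (f y))\<^sup>2 * \<pi> y \<partial>lborel)"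
    using lborel_integral_real_affine[where c=1 and t=u and f="\<lambda>y. (cmod (f y))\<^sup>2 * \<pi> y"]
    by (simp add: add.commute)
  finally show ?thesis .
qed

lemma sqrt_set_integral_shift_le:
  assumes "f \<in> borel_measurable borel" "bounded (range f)" "A \<in> sets borel" "A \<noteq> {}"
  shows "sqrt (LBINT x:A. (cmod (f (x + u)))\<^sup>2 * (t x (x + u))\<^sup>2 * \<pi> x)
    \<le> t_sym_sup A u * L2_norm \<pi> f"
proof -
  have "(LBINT x:A. (cmod (f (x + u)))\<^sup>2 * (t x (x + u))\<^sup>2 * \<pi> x)
      \<le> (t_sym_sup A u)\<^sup>2 * (\<integral>y. (cmod (f y))\<^sup>2 * \<pi> y \<partial>lborel)"
    using assms(1-3) by (intro set_integral_shift_le t_sym_le_sup)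
  then have "sqrt (LBINT x:A. (cmod (f (x + u)))\<^sup>2 * (t x (x + u))\<^sup>2 * \<pi> x)
      \<le> sqrt ((t_sym_sup A u)\<^sup>2 * (\<integral>y. (cmod (f y))\<^sup>2 * \<pi> y \<partial>lborel))"
    by (rule real_sqrt_le_mono)
  then show ?thesis
    using t_sym_sup_nonneg[OF assms(4)] by (simp add: L2_norm_def real_sqrt_mult)
qed

lemma shift_integral_le_beta:
  assumes [measurable]: "f \<in> borel_measurable borel" and f_bdd: "bounded (range f)"
  shows "(LBINT u:{-s..s}. sqrt (LBINT x:{x. a < \<bar>x\<bar>}. (cmod (f (x + u)))\<^sup>2 * (t x (x + u))\<^sup>2 * \<pi> x))
    \<le> beta_a a s \<pi> q * L2_norm \<pi> f"
proof -
  define A where "A = {x::real. a < \<bar>x\<bar>}"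
  have [measurable]: "A \<in> sets borel"
    unfolding A_def by (intro borel_open open_Collect_less continuous_intros)
  have A_ne: "A \<noteq> {}"
    using A_def gt_ex less_le_trans abs_ge_self by blast
  have [measurable]: "t_sym_sup A \<in> borel_measurable borel"
    using A_ne by (rule measurable_t_sym_sup)
  obtain B where B: "\<And>u. t_sym_sup A u \<le> B" using t_sym_sup_bounded A_ne by metis
  have L2_nonneg: "0 \<le> L2_norm \<pi> f"
    unfolding L2_norm_def using pi_pos by (simp add: integral_nonneg_AE less_imp_le)
  have "(LBINT u:{-s..s}. sqrt (LBINT x:A. (cmod (f (x + u)))\<^sup>2 * (t x (x + u))\<^sup>2 * \<pi> x))
      \<le> (LBINT u:{-s..s}. t_sym_sup A u * L2_norm \<pi> f)"
    unfolding set_lebesgue_integral_def[of _ "{-s..s}"]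
  proof (rule integral_mono')
    have "\<bar>t_sym_sup A u * L2_norm \<pi> f\<bar> \<le> B * L2_norm \<pi> f" for u
      using t_sym_sup_nonneg[OF A_ne] B L2_nonneg by (simp add: abs_mult mult_right_mono)
    then have "integrable lborel (\<lambda>u. indicator {-s..s} u * (t_sym_sup A u * L2_norm \<pi> f))"
    proof (rule integrable_mult_bounded[rotated 2])
      show "integrable lborel (indicator {-s..s} :: real \<Rightarrow> real)"
        by (simp add: emeasure_lborel_Icc_eq)
    qed measurable
    then show "integrable lborel (\<lambda>u. indicator {-s..s} u *\<^sub>R (t_sym_sup A u * L2_norm \<pi> f))"
      by simp
    show "indicator {-s..s} u *\<^sub>R sqrt (LBINT x:A. (cmod (f (x + u)))\<^sup>2 * (t x (x + u))\<^sup>2 * \<pi> x)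
      \<le> indicator {-s..s} u *\<^sub>R (t_sym_sup A u * L2_norm \<pi> f)" for u
      using sqrt_set_integral_shift_le[OF assms(1) f_bdd _ A_ne, of u] by (simp add: indicator_def)
  qed (use t_sym_sup_nonneg[OF A_ne] L2_nonneg in simp)
  also have "\<dots> = beta_a a s \<pi> q * L2_norm \<pi> f"
    by (simp add: beta_a_eq_t_sym_sup A_def set_lebesgue_integral_def mult_ac)
  finally show ?thesis unfolding A_def .
qed

end

theorem lemma3p4:
  fixes \<pi> :: "real \<Rightarrow> real" and q :: "real \<Rightarrow> real \<Rightarrow> real"
    and s a :: real and f :: "real \<Rightarrow> complex"
  assumes pi_pos: "\<And>x. \<pi> x > 0"
    and pi_cont: "continuous_on UNIV \<pi>"
    and pi_int: "integrable lborel \<pi>"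
    and pi_prob: "(LINT x|lborel. \<pi> x) = 1"
    and q_nonneg: "\<And>x y. q x y \<ge> 0"
    and q_bdd: "\<exists>B. \<forall>x y. q x y \<le> B"
    and q_cont: "continuous_on UNIV (\<lambda>p::real \<times> real. q (fst p) (snd p))"
    and q_int: "\<And>x. integrable lborel (q x)"
    and q_prob: "\<And>x. (LINT y|lborel. q x y) = 1"
    and s_pos: "s > 0"
    and q_supp: "\<And>x u. \<bar>u\<bar> > s \<Longrightarrow> q x (x + u) = 0"
    and a_pos: "a > 0"
    and f_cont: "continuous_on UNIV f"
    and f_bdd: "bounded (range f)"
  shows "L2_norm \<pi> (T_ac a \<pi> q f)
           \<le> (LBINT u:{-s..s}. sqrt (LBINT x:{x. \<bar>x\<bar> > a}.
                 (cmod (f (x + u)))\<^sup>2 * (mh_t \<pi> q x (x + u))\<^sup>2 * \<pi> x))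
       \<and> (LBINT u:{-s..s}. sqrt (LBINT x:{x. \<bar>x\<bar> > a}.
                 (cmod (f (x + u)))\<^sup>2 * (mh_t \<pi> q x (x + u))\<^sup>2 * \<pi> x))
           \<le> beta_a a s \<pi> q * L2_norm \<pi> f"
proof -
  interpret mh_kernel \<pi> q s
    using pi_pos pi_cont pi_int q_nonneg q_bdd q_cont q_supp by unfold_locales auto
  have "f \<in> borel_measurable borel"
    using f_cont by (rule borel_measurable_continuous_onI)
  with f_bdd show ?thesis
    using L2_norm_T_ac_le shift_integral_le_beta by blast
qed

end
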